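(* Let $\mathsf{\Sigma}\in\mathbb{R}^{N\times N_S}$ and $\mathsf{\Lambda}\in\mathbb{R}^{N\times N_L}$ be the Star-to-RWG and Loop-to-RWG matrices of a triangular surface mesh (see context), so that $\mathsf{\Sigma}^{\mathrm T}\mathsf{\Lambda}=\mathsf{0}$. For $1\le n\le N_S$ and $1\le m\le N_L$ define the filtered Star and Loop matrices $$\mathsf{\Sigma}_n=\mathsf{\Sigma}(\mathsf{\Sigma}^{\mathrm T}\mathsf{\Sigma})^+(\mathsf{\Sigma}^{\mathrm T}\mathsf{\Sigma})_n,\qquad \mathsf{\Lambda}_m=\mathsf{\Lambda}(\mathsf{\Lambda}^{\mathrm T}\mathsf{\Lambda})^+(\mathsf{\Lambda}^{\mathrm T}\mathsf{\Lambda})_m .$$ Then $\mathsf{\Sigma}_n^{\mathrm T}\mathsf{\Lambda}_m=\mathsf{0}$ for all such $n,m$.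
   Context: Consider a closed triangulated surface with $N$ edges, $N_S$ triangles (cells) and $N_L$ vertices. Each edge $m$ is shared by two triangles $c_m^+$ and $c_m^-$. The Star-to-RWG matrix is defined by $[\mathsf{\Sigma}]_{mn}=1$ if cell $n$ is $c_m^+$, $-1$ if cell $n$ is $c_m^-$, and $0$ otherwise. The Loop-to-RWG matrix $\mathsf{\Lambda}$ has $[\mathsf{\Lambda}]_{mn}=\pm1$ when vertex $n$ is one of the two endpoints of edge $m$ (opposite signs for the two endpoints, fixed by the orientation convention of the RWG functions) and $0$ otherwise; with this convention $\mathsf{\Sigma}^{\mathrm T}\mathsf{\Lambda}=\mathsf{0}$. $^+$ denotes the Moore–Penrose pseudo-inverse. Filtered Laplacian: for $\mathsf{X}\in\{\mathsf{\Sigma},\mathsf{\Lambda}\}$ with $N_x$ columns, let $\mathsf{X}=\mathsf{U}_X\mathsf{S}_X\mathsf{V}_X^{\mathrm T}$ be a (fixed) singular value decomposition with $\mathsf{V}_X\in\mathbb{R}^{N_x\times N_x}$ orthogonal and singular values $\sigma_{X,1}\ge\sigma_{X,2}\ge\dots\ge\sigma_{X,N_x}\ge0$, so that $\mathsf{X}^{\mathrm T}\mathsf{X}=\mathsf{V}_X\,\mathrm{diag}(\sigma_{X,i}^2)\,\mathsf{V}_X^{\mathrm T}$. For $1\le n\le N_x$ let $\mathsf{L}_{X,n}$ be the $N_x\times N_x$ diagonal matrix with $[\mathsf{L}_{X,n}]_{ii}=\sigma_{X,i}$ if $i>N_x-n$ and $0$ otherwise, and set $(\mathsf{X}^{\mathrm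 T}\mathsf{X})_n=\mathsf{V}_X\mathsf{L}_{X,n}^2\mathsf{V}_X^{\mathrm T}$. *)

theory Defs
  imports "Jordan_Normal_Form.Matrix"
begin

text \<open>Real matrices are Jordan_Normal_Form matrices (row/column indices start at 0).\<close>

definition star_mat :: "nat \<Rightarrow> nat \<Rightarrow> (nat \<Rightarrow> nat) \<Rightarrow> (nat \<Rightarrow> nat) \<Rightarrow> real mat" where
  "star_mat N NS cp cm = mat N NS (\<lambda>(m, n). if n = cp m then 1 else if n = cm m then -1 else 0)"

text \<open>Loop-to-RWG matrix: N x NL; row m has s m in column va m and - s m in column vb m,
  where va m, vb m are the endpoints of edge m and s m in {1,-1} is the orientation sign.\<close>
definition loop_mat :: "nat \<Rightarrow> nat \<Rightarrow> (nat \<Rightarrow> nat) \<Rightarrow> (nat \<Rightarrow> nat) \<Rightarrow> (nat \<Rightarrow> real) \<Rightarrow> real mat" where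
  "loop_mat N NL va vb s = mat N NL (\<lambda>(m, n). if n = va m then s m else if n = vb m then - s m else 0)"

definition is_pinv :: "real mat \<Rightarrow> real mat \<Rightarrow> bool" where
  "is_pinv A X \<longleftrightarrow> X \<in> carrier_mat (dim_col A) (dim_row A) \<and>
     A * X * A = A \<and> X * A * X = X \<and>
     transpose_mat (A * X) = A * X \<and> transpose_mat (X * A) = X * A"

definition pinv :: "real mat \<Rightarrow> real mat" where
  "pinv A = (THE X. is_pinv A X)"

definition orthogonal_mat :: "nat \<Rightarrow> real mat \<Rightarrow> bool" where
  "orthogonal_mat k V \<longleftrightarrow> V \<in> carrier_mat k k \<and> transpose_mat V * V = 1\<^sub>m k \<and> V * transpose_mat V = 1\<^sub>m k"

text \<open>Singular value decomposition X = U S V^T of an r x c matrix X, with U (r x r) and V (c x c)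
  orthogonal, S the r x c rectangular diagonal matrix with entries sigma 0 \<ge> sigma 1 \<ge> ... \<ge> 0
  (0-based: sigma i is the (i+1)-th singular value, for i < c; sigma i = 0 if i \<ge> r).\<close>
definition is_svd :: "real mat \<Rightarrow> real mat \<Rightarrow> (nat \<Rightarrow> real) \<Rightarrow> real mat \<Rightarrow> bool" where
  "is_svd X U \<sigma> V \<longleftrightarrow>
     orthogonal_mat (dim_row X) U \<and> orthogonal_mat (dim_col X) V \<and>
     (\<forall>i < dim_col X. 0 \<le> \<sigma> i) \<and> (\<forall>i. dim_row X \<le> i \<longrightarrow> i < dim_col X \<longrightarrow> \<sigma> i = 0) \<and> (\<forall>i j. i \<le> j \<longrightarrow> j < dim_col X \<longrightarrow> \<sigma> j \<le> \<sigma> i) \<and>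
     X = U * mat (dim_row X) (dim_col X) (\<lambda>(i, j). if i = j then \<sigma> i else 0) * transpose_mat V"

text \<open>Filtered Laplacian (X^T X)_n = V L_n^2 V^T, where (1-based) [L_n]_ii = sigma_i for i > c - n,
  i.e. 0-based index i \<ge> c - n.\<close>
definition filt_L :: "nat \<Rightarrow> (nat \<Rightarrow> real) \<Rightarrow> nat \<Rightarrow> real mat" where
  "filt_L c \<sigma> n = mat c c (\<lambda>(i, j). if i = j \<and> c - n \<le> i then \<sigma> i else 0)"

definition filt_lap :: "nat \<Rightarrow> real mat \<Rightarrow> (nat \<Rightarrow> real) \<Rightarrow> nat \<Rightarrow> real mat" where
  "filt_lap c V \<sigma> n = V * (filt_L c \<sigma> n * filt_L c \<sigma> n) * transpose_mat V"

definition filt_mat :: "real mat \<Rightarrow> real mat \<Rightarrow> (nat \<Rightarrow> real) \<Rightarrow> nat \<Rightarrow> real mat" where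
  "filt_mat X V \<sigma> n = X * pinv (transpose_mat X * X) * filt_lap (dim_col X) V \<sigma> n"

end

theory Submission
  imports Defs
begin

text \<open>A filtered matrix is a right multiple of the original one: with
  \<open>M = (\<Sigma>\<^sup>T\<Sigma>)\<^sup>+ (\<Sigma>\<^sup>T\<Sigma>)\<^sub>n\<close> and \<open>K = (\<Lambda>\<^sup>T\<Lambda>)\<^sup>+ (\<Lambda>\<^sup>T\<Lambda>)\<^sub>m\<close> square,
  \<open>\<Sigma>\<^sub>n\<^sup>T \<Lambda>\<^sub>m = M\<^sup>T (\<Sigma>\<^sup>T \<Lambda>) K = 0\<close>. Only the orthogonality \<open>\<Sigma>\<^sup>T \<Lambda> = 0\<close> and the
  SVDs enter. The one point needing work is
  that \<open>pinv\<close>, defined by a definite description, really denotes a square matrix of the right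
  size: the SVD writes the Gram matrix as \<open>V diag(\<sigma>\<^sup>2) V\<^sup>T\<close>, whose Moore--Penrose inverse
  \<open>V diag(\<sigma>\<^sup>-\<^sup>2) V\<^sup>T\<close> is unique by the Penrose conditions.\<close>

lemma assoc_mult_mat_dims:
  "dim_col A = dim_row B \<Longrightarrow> dim_col B = dim_row C \<Longrightarrow> A * B * C = A * (B * C)"
  by (rule assoc_mult_mat[of A _ _ B _ C]) auto

lemma transpose_mult_dims:
  fixes A B :: "'a :: comm_semiring_0 mat"
  shows "dim_col A = dim_row B \<Longrightarrow> transpose_mat (A * B) = transpose_mat B * transpose_mat A"
  by (rule transpose_mult[of A _ _ B]) auto

definition diag_rect :: "nat \<Rightarrow> nat \<Rightarrow> (nat \<Rightarrow> 'a :: zero) \<Rightarrow> 'a mat" where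
  "diag_rect r c f = mat r c (\<lambda>(i, j). if i = j then f i else 0)"

lemma dim_diag_rect [simp]:
  "dim_row (diag_rect r c f) = r" "dim_col (diag_rect r c f) = c"
  by (simp_all add: diag_rect_def)

lemma diag_rect_cong:
  "(\<And>i. i < r \<Longrightarrow> i < c \<Longrightarrow> f i = g i) \<Longrightarrow> diag_rect r c f = diag_rect r c g"
  by (intro eq_matI) (auto simp: diag_rect_def)

lemma transpose_diag_rect [simp]: "transpose_mat (diag_rect r c f) = diag_rect c r f"
  by (intro eq_matI) (auto simp: diag_rect_def)

lemma diag_rect_mult:
  fixes f g :: "nat \<Rightarrow> 'a :: semiring_0"
  shows "diag_rect r k f * diag_rect k c g = diag_rect r c (\<lambda>i. if i < k then f i * g i else 0)"
proof (intro eq_matI)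
  fix i j assume ij: "i < dim_row (diag_rect r c (\<lambda>i. if i < k then f i * g i else 0))"
    "j < dim_col (diag_rect r c (\<lambda>i. if i < k then f i * g i else 0))"
  then have "(diag_rect r k f * diag_rect k c g) $$ (i, j)
      = (\<Sum>l = 0..<k. (if i = l then f i else 0) * (if l = j then g l else 0))"
    by (auto simp: diag_rect_def scalar_prod_def intro!: sum.cong)
  also have "\<dots> = (\<Sum>l = 0..<k. if l = i then (if i = j then f i * g i else 0) else 0)"
    by (rule sum.cong) auto
  finally show "(diag_rect r k f * diag_rect k c g) $$ (i, j)
      = diag_rect r c (\<lambda>i. if i < k then f i * g i else 0) $$ (i, j)"
    using ij by (simp add: diag_rect_def)
qed auto

text \<open>Since \<open>inverse 0 = 0\<close>, zero diagonal entries are inverted to zero.\<close>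

lemma is_pinv_diag_rect:
  "is_pinv (diag_rect r c h) (diag_rect c r (\<lambda>i. inverse (h i)))"
  unfolding is_pinv_def
  by (auto simp: diag_rect_mult intro!: diag_rect_cong; metis left_inverse right_inverse)

lemma is_pinv_unique:
  assumes X: "is_pinv A X" and Y: "is_pinv A Y"
  shows "X = Y"
proof -
  have dims: "dim_row X = dim_col A" "dim_col X = dim_row A"
    "dim_row Y = dim_col A" "dim_col Y = dim_row A"
    using X Y by (auto simp: is_pinv_def)
  have AXA: "A * X * A = A" and XAX: "X * A * X = X"
    and sym_AX: "transpose_mat (A * X) = A * X" and sym_XA: "transpose_mat (X * A) = X * A"
    using X by (auto simp: is_pinv_def)
  have AYA: "A * Y * A = A" and YAY: "Y * A * Y = Y"
    and sym_AY: "transpose_mat (A * Y) = A * Y" and sym_YA: "transpose_mat (Y * A) = Y * A"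
    using Y by (auto simp: is_pinv_def)
  have "A * X = A * Y * A * X"
    by (simp add: AYA)
  also have "\<dots> = transpose_mat (A * Y) * transpose_mat (A * X)"
    by (simp add: sym_AX sym_AY assoc_mult_mat_dims dims)
  also have "\<dots> = transpose_mat (A * X * A * Y)"
    by (simp add: transpose_mult_dims assoc_mult_mat_dims dims)
  finally have AX_eq_AY: "A * X = A * Y"
    by (simp add: AXA sym_AY)
  have "X * A = X * (A * Y * A)"
    by (simp add: AYA)
  also have "\<dots> = transpose_mat (X * A) * transpose_mat (Y * A)"
    by (simp add: sym_XA sym_YA assoc_mult_mat_dims dims)
  also have "\<dots> = transpose_mat (Y * (A * X * A))"
    by (simp add: transpose_mult_dims assoc_mult_mat_dims dims)
  finally have XA_eq_YA: "X * A = Y * A"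
    by (simp add: AXA sym_YA)
  have "X = X * (A * Y)"
    using XAX by (simp add: AX_eq_AY [symmetric] assoc_mult_mat_dims dims)
  also have "\<dots> = Y"
    using YAY by (simp add: XA_eq_YA [symmetric] assoc_mult_mat_dims dims)
  finally show ?thesis .
qed

lemma pinv_eqI: "is_pinv A X \<Longrightarrow> pinv A = X"
  unfolding pinv_def by (blast intro: the_equality is_pinv_unique)

lemma orthogonal_matD:
  assumes "orthogonal_mat k V"
  shows "dim_row V = k" "dim_col V = k"
    "transpose_mat V * V = 1\<^sub>m k" "V * transpose_mat V = 1\<^sub>m k"
  using assms by (auto simp: orthogonal_mat_def)

lemma orthogonal_mat_cancel_left:
  assumes "orthogonal_mat k V" and "dim_row B = k"
  shows "transpose_mat V * (V * B) = B"
  using assms by (simp add: assoc_mult_mat_dims [symmetric] orthogonal_matD)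

lemma orthogonal_conj_mult:
  assumes V: "orthogonal_mat k V" and A: "A \<in> carrier_mat k k" and B: "B \<in> carrier_mat k k"
  shows "V * A * transpose_mat V * (V * B * transpose_mat V) = V * (A * B) * transpose_mat V"
  using V A B by (simp add: assoc_mult_mat_dims orthogonal_mat_cancel_left orthogonal_matD)

lemma orthogonal_conj_transpose:
  assumes V: "orthogonal_mat k V" and A: "A \<in> carrier_mat k k"
  shows "transpose_mat (V * A * transpose_mat V) = V * transpose_mat A * transpose_mat V"
  using V A by (simp add: transpose_mult_dims assoc_mult_mat_dims orthogonal_matD)

lemma is_pinv_orthogonal_conj:
  assumes V: "orthogonal_mat k V" and A: "A \<in> carrier_mat k k" and X: "is_pinv A X"
  shows "is_pinv (V * A * transpose_mat V) (V * X * transpose_mat V)"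
proof -
  have X_carrier: "X \<in> carrier_mat k k"
    using X A by (simp add: is_pinv_def)
  have "V * X * transpose_mat V \<in> carrier_mat k k"
    using V X_carrier by (auto simp: orthogonal_matD intro!: carrier_matI)
  with X A X_carrier show ?thesis
    unfolding is_pinv_def
    by (simp add: orthogonal_conj_mult [OF V] orthogonal_conj_transpose [OF V] orthogonal_matD [OF V])
qed

lemma svd_gram:
  assumes "is_svd X U \<sigma> V"
  shows "transpose_mat X * X = V * diag_rect (dim_col X) (dim_col X) (\<lambda>i. (\<sigma> i)\<^sup>2) * transpose_mat V"
proof -
  let ?r = "dim_row X" and ?c = "dim_col X"
  define D where "D = diag_rect ?r ?c \<sigma>"
  have U: "orthogonal_mat ?r U" and V: "orthogonal_mat ?c V" and X: "X = U * D * transpose_mat V"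
    using assms by (auto simp: is_svd_def D_def diag_rect_def)
  have "transpose_mat X * X = transpose_mat (U * D * transpose_mat V) * (U * D * transpose_mat V)"
    by (simp only: X)
  also have "\<dots> = V * (transpose_mat D * D) * transpose_mat V"
    using U V by (simp add: D_def transpose_mult_dims assoc_mult_mat_dims
        orthogonal_mat_cancel_left orthogonal_matD)
  also have "transpose_mat D * D = diag_rect ?c ?c (\<lambda>i. (\<sigma> i)\<^sup>2)"
    using assms by (auto simp: D_def diag_rect_mult is_svd_def power2_eq_square intro!: diag_rect_cong)
  finally show ?thesis .
qed

lemma pinv_gram_svd:
  assumes "is_svd X U \<sigma> V"
  shows "pinv (transpose_mat X * X)
    = V * diag_rect (dim_col X) (dim_col X) (\<lambda>i. inverse ((\<sigma> i)\<^sup>2)) * transpose_mat V"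
  unfolding svd_gram [OF assms]
  by (intro pinv_eqI is_pinv_orthogonal_conj is_pinv_diag_rect) (use assms in \<open>auto simp: is_svd_def\<close>)

lemma filt_mat_right_factor:
  assumes "is_svd X U \<sigma> V"
  obtains M where "M \<in> carrier_mat (dim_col X) (dim_col X)" "filt_mat X V \<sigma> n = X * M"
proof
  let ?c = "dim_col X"
  have "dim_row V = ?c" "dim_col V = ?c"
    using assms by (auto simp: is_svd_def orthogonal_matD)
  then show "pinv (transpose_mat X * X) * filt_lap ?c V \<sigma> n \<in> carrier_mat ?c ?c"
    and "filt_mat X V \<sigma> n = X * (pinv (transpose_mat X * X) * filt_lap ?c V \<sigma> n)"
    by (auto simp: filt_mat_def filt_lap_def filt_L_def pinv_gram_svd [OF assms] assoc_mult_mat_dims)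
qed

lemma transpose_mult_right_factors_eq_0:
  fixes S L M K :: "'a :: comm_semiring_0 mat"
  assumes SL: "transpose_mat S * L = 0\<^sub>m a b"
    and S: "S \<in> carrier_mat N a" and L: "L \<in> carrier_mat N b"
    and M: "M \<in> carrier_mat a a'" and K: "K \<in> carrier_mat b b'"
  shows "transpose_mat (S * M) * (L * K) = 0\<^sub>m a' b'"
proof -
  have "transpose_mat (S * M) * (L * K) = transpose_mat M * (transpose_mat S * L) * K"
    using S L M K by (simp add: transpose_mult_dims assoc_mult_mat_dims)
  also have "\<dots> = 0\<^sub>m a' b'"
    using M K by (simp add: SL)
  finally show ?thesis .
qed

theorem mainTheorem1:
  fixes N NS NL :: nat
    and cp cm :: "nat \<Rightarrow> nat" \<comment> \<open>the cells c_m^+ and c_m^- of edge m\<close>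
    and va vb :: "nat \<Rightarrow> nat" \<comment> \<open>the two endpoints of edge m\<close>
    and s :: "nat \<Rightarrow> real" \<comment> \<open>orientation sign of edge m\<close>
    and US VS UL VL :: "real mat" and \<sigma>S \<sigma>L :: "nat \<Rightarrow> real"
    and n m :: nat
  assumes cells: "\<And>e. e < N \<Longrightarrow> cp e < NS \<and> cm e < NS \<and> cp e \<noteq> cm e"
    and verts: "\<And>e. e < N \<Longrightarrow> va e < NL \<and> vb e < NL \<and> va e \<noteq> vb e"
    and signs: "\<And>e. e < N \<Longrightarrow> s e = 1 \<or> s e = -1"
    and orth: "transpose_mat (star_mat N NS cp cm) * loop_mat N NL va vb s = 0\<^sub>m NS NL"
    and svdS: "is_svd (star_mat N NS cp cm) US \<sigma>S VS"
    and svdL: "is_svd (loop_mat N NL va vb s) UL \<sigma>L VL"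
    and n: "1 \<le> n" "n \<le> NS"
    and m: "1 \<le> m" "m \<le> NL"
  shows "transpose_mat (filt_mat (star_mat N NS cp cm) VS \<sigma>S n)
           * filt_mat (loop_mat N NL va vb s) VL \<sigma>L m = 0\<^sub>m NS NL"
proof -
  let ?S = "star_mat N NS cp cm" and ?L = "loop_mat N NL va vb s"
  have S: "?S \<in> carrier_mat N NS" by (simp add: star_mat_def)
  have L: "?L \<in> carrier_mat N NL" by (simp add: loop_mat_def)
  obtain M where M: "M \<in> carrier_mat NS NS" "filt_mat ?S VS \<sigma>S n = ?S * M"
    using filt_mat_right_factor [OF svdS] S by auto
  obtain K where K: "K \<in> carrier_mat NL NL" "filt_mat ?L VL \<sigma>L m = ?L * K"
    using filt_mat_right_factor [OF svdL] L by auto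
  show ?thesis
    unfolding M(2) K(2) by (rule transpose_mult_right_factors_eq_0 [OF orth S L M(1) K(1)])
qed

end
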